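(* Let $S=(P,L)$ be a finite $(2,t)$-generalized quadrangle and let $(R,\psi)$ be a faithful representation of $S$, with $\psi(x)=\langle r_x\rangle$ and $R_\psi=\{r_x:x\in P\}$. Assume that $(t,|R|)\neq(2,2^4)$. If $x,y\in P$ are distinct and $r_xr_y\in R_\psi$, then $x$ and $y$ are collinear.
   Context: A $(2,t)$-generalized quadrangle is a partial linear space in which every line has exactly $3$ points, every point lies on exactly $t+1$ lines, no point is collinear with all points, and for every point $x$ and line $\ell$ with $x\notin\ell$, $x$ is collinear with exactly one point of $\ell$. A representation $(R,\psi)$ of $S$ is a group $R$ with a map $\psi$ assigning to each point $x$ a subgroup $\psi(x)=\langle r_x\rangle$ of order $2$, such that $R$ is generated by the $r_x$ and, for every line $\{x,y,z\}$, $\{1,r_x,r_y,r_z\}$ is a Klein four subgroup. It is faithful if $\psi$ is injective. *)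

theory Defs
  imports "HOL-Algebra.Algebra"
begin

definition collinear :: "'a set set \<Rightarrow> 'a \<Rightarrow> 'a \<Rightarrow> bool" where
  "collinear L x y \<longleftrightarrow> (\<exists>l\<in>L. x \<in> l \<and> y \<in> l)"

definition partial_linear_space :: "'a set \<Rightarrow> 'a set set \<Rightarrow> bool" where
  "partial_linear_space P L \<longleftrightarrow>
     (\<forall>l\<in>L. l \<subseteq> P \<and> card l \<ge> 2) \<and>
     (\<forall>x\<in>P. \<forall>y\<in>P. x \<noteq> y \<longrightarrow> card {l\<in>L. x \<in> l \<and> y \<in> l} \<le> 1)"

definition gq_2t :: "'a set \<Rightarrow> 'a set set \<Rightarrow> nat \<Rightarrow> bool" where
  "gq_2t P L t \<longleftrightarrow>
     partial_linear_space P L \<and>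
     (\<forall>l\<in>L. card l = 3) \<and>
     (\<forall>x\<in>P. card {l\<in>L. x \<in> l} = t + 1) \<and>
     (\<forall>x\<in>P. \<exists>y\<in>P. \<not> collinear L x y) \<and>
     (\<forall>x\<in>P. \<forall>l\<in>L. x \<notin> l \<longrightarrow> (\<exists>!y. y \<in> l \<and> collinear L x y))"

definition klein_four_subgroup :: "('g, 'b) monoid_scheme \<Rightarrow> 'g set \<Rightarrow> bool" where
  "klein_four_subgroup R H \<longleftrightarrow>
     subgroup H R \<and> card H = 4 \<and> (\<forall>h\<in>H. h \<otimes>\<^bsub>R\<^esub> h = \<one>\<^bsub>R\<^esub>)"

text \<open>A representation: psi x = subgroup generated by r x, of order 2.\<close>
definition representation ::
  "'a set \<Rightarrow> 'a set set \<Rightarrow> ('g, 'b) monoid_scheme \<Rightarrow> ('a \<Rightarrow> 'g) \<Rightarrow> bool" where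
  "representation P L R r \<longleftrightarrow>
     group R \<and>
     (\<forall>x\<in>P. r x \<in> carrier R \<and> group.ord R (r x) = 2) \<and>
     generate R (r ` P) = carrier R \<and>
     (\<forall>l\<in>L. \<forall>x y z. l = {x, y, z} \<longrightarrow>
        klein_four_subgroup R {\<one>\<^bsub>R\<^esub>, r x, r y, r z})"

definition faithful_representation ::
  "'a set \<Rightarrow> 'a set set \<Rightarrow> ('g, 'b) monoid_scheme \<Rightarrow> ('a \<Rightarrow> 'g) \<Rightarrow> bool" where
  "faithful_representation P L R r \<longleftrightarrow>
     representation P L R r \<and> inj_on (\<lambda>x. generate R {r x}) P"

end

theory Submission
  imports Defs
begin

(* Suppose x and y are not collinear and r x * r y = r z. The generalized quadrangle axiom
   forces every point collinear with both x and y to be collinear with z as well. With this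
   one shows that r a * r b stays in the image of r when b moves along a line avoiding the
   points collinear with a; since the points not collinear with a fixed point form a connected
   graph, r a * r b lies in the image of r for all non-collinear a, b. Hence the image of r
   together with 1 is closed under multiplication, so it is all of R and |R| = |P| + 1 = 6t + 4,
   while 1 together with the image of the points collinear with x is a subgroup of order 2t + 4.
   By Lagrange 2t + 4 divides 6t + 4, hence divides 8, which forces t = 2 and |R| = 16. *)

lemma card_double_counting:
  assumes "finite S" "finite T"
    and "\<And>i. i \<in> S \<Longrightarrow> card {j\<in>T. R i j} = m"
    and "\<And>j. j \<in> T \<Longrightarrow> card {i\<in>S. R i j} = k"
  shows "m * card S = k * card T"
proof -
  have "(\<Sum>i\<in>S. card {j\<in>T. R i j}) = k * card T"
    using sum_multicount[OF assms(1,2)] assms(4) by blast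
  then show ?thesis
    using assms(3) by (simp add: mult.commute)
qed

lemma eq_2_if_dvd_6n_plus_4:
  fixes n :: nat
  assumes "0 < n" "2 * n + 4 dvd 6 * n + 4"
  shows "n = 2"
proof -
  have "2 * n + 4 dvd (6 * n + 4) + 8"
    using dvd_triv_right[of "2 * n + 4" 3] by (simp add: algebra_simps)
  then have dvd8: "2 * n + 4 dvd 8"
    using dvd_add_right_iff[OF assms(2)] by blast
  then have "n \<le> 2"
    using dvd_imp_le[OF dvd8] by simp
  moreover have "n \<noteq> 1"
    using dvd8 by auto
  ultimately show ?thesis
    using assms(1) by linarith
qed

lemma (in group) involution_cancel_left:
  "a \<in> carrier G \<Longrightarrow> b \<in> carrier G \<Longrightarrow> a \<otimes> a = \<one> \<Longrightarrow> a \<otimes> (a \<otimes> b) = b"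
  by (simp add: m_assoc[symmetric])

lemma (in group) involution_cancel_middle:
  "a \<in> carrier G \<Longrightarrow> b \<in> carrier G \<Longrightarrow> p \<in> carrier G \<Longrightarrow> p \<otimes> p = \<one> \<Longrightarrow>
    (a \<otimes> p) \<otimes> (p \<otimes> b) = a \<otimes> b"
  by (simp add: m_assoc[symmetric]) (simp add: m_assoc)

lemma (in group) involutions_commute:
  assumes "a \<in> carrier G" "b \<in> carrier G"
    and "a \<otimes> a = \<one>" "b \<otimes> b = \<one>" "(a \<otimes> b) \<otimes> (a \<otimes> b) = \<one>"
  shows "b \<otimes> a = a \<otimes> b"
proof -
  have "inv a = a" "inv b = b"
    using assms by (simp_all add: inv_equality)
  have "b \<otimes> a = inv (a \<otimes> b)"
    using assms \<open>inv a = a\<close> \<open>inv b = b\<close> by (simp add: inv_mult_group)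
  also have "\<dots> = a \<otimes> b"
    using assms by (intro inv_equality) simp_all
  finally show ?thesis .
qed

lemma (in group) involution_of_ord_2:
  assumes "a \<in> carrier G" "ord a = 2"
  shows "a \<otimes> a = \<one>" "a \<noteq> \<one>"
proof -
  have "a [^] (2::nat) = \<one>"
    using pow_ord_eq_1[OF assms(1)] assms(2) by simp
  then show "a \<otimes> a = \<one>"
    using assms(1) by (simp add: numeral_2_eq_2 nat_pow_Suc2)
  show "a \<noteq> \<one>"
    using assms(2) by auto
qed

lemma (in group) klein_four_prod:
  assumes "klein_four_subgroup G {\<one>, a, b, c}"
  shows "a \<otimes> b = c"
proof -
  let ?H = "{\<one>, a, b, c}"
  have sub: "subgroup ?H G" and sq: "\<forall>h\<in>?H. h \<otimes> h = \<one>"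
    using assms unfolding klein_four_subgroup_def by blast+
  have "distinct [\<one>, a, b, c]"
    using assms unfolding klein_four_subgroup_def by (intro card_distinct) simp
  then have ne: "a \<noteq> \<one>" "b \<noteq> \<one>" "a \<noteq> b"
    by auto
  have carr: "a \<in> carrier G" "b \<in> carrier G"
    using subgroup.subset[OF sub] by auto
  have "a \<otimes> b \<in> ?H"
    using subgroup.m_closed[OF sub] by simp
  moreover have "a \<otimes> b \<noteq> \<one>"
  proof
    assume "a \<otimes> b = \<one>"
    then have "a \<otimes> b = a \<otimes> a"
      using sq by simp
    then show False
      using carr ne(3) by simp
  qed
  ultimately show ?thesis
    using carr ne by auto
qed

lemma (in group) subgroup_insert_one_of_involutions:
  assumes "A \<subseteq> carrier G" "\<And>a. a \<in> A \<Longrightarrow> a \<otimes> a = \<one>"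
    and "\<And>a b. a \<in> A \<Longrightarrow> b \<in> A \<Longrightarrow> a \<otimes> b \<in> insert \<one> A"
  shows "subgroup (insert \<one> A) G"
proof (rule subgroupI)
  have "inv a = a" if "a \<in> A" for a
    using that assms(1,2) by (simp add: inv_equality subsetD)
  then show "inv a \<in> insert \<one> A" if "a \<in> insert \<one> A" for a
    using that by auto
  show "a \<otimes> b \<in> insert \<one> A" if "a \<in> insert \<one> A" "b \<in> insert \<one> A" for a b
    using that assms(1,3) by auto
qed (use assms(1) in auto)

section \<open>Generalized quadrangles of order (2, t)\<close>

locale gq_2t_space =
  fixes P :: "'a set" and L :: "'a set set" and t :: nat
  assumes finite_points: "finite P" and gq: "gq_2t P L t"
begin

lemma line_subset: "l \<in> L \<Longrightarrow> l \<subseteq> P"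
  using gq unfolding gq_2t_def partial_linear_space_def by simp

lemma card_line: "l \<in> L \<Longrightarrow> card l = 3"
  using gq unfolding gq_2t_def by simp

lemma card_lines_through: "x \<in> P \<Longrightarrow> card {l\<in>L. x \<in> l} = t + 1"
  using gq unfolding gq_2t_def by simp

lemma ex_noncollinear: "x \<in> P \<Longrightarrow> \<exists>y\<in>P. \<not> collinear L x y"
  using gq unfolding gq_2t_def by simp

lemma ex1_collinear_point:
  "x \<in> P \<Longrightarrow> l \<in> L \<Longrightarrow> x \<notin> l \<Longrightarrow> \<exists>!y. y \<in> l \<and> collinear L x y"
  using gq unfolding gq_2t_def by simp

lemma finite_lines: "finite L"
proof (rule finite_subset)
  show "L \<subseteq> Pow P"
    using line_subset by blast
qed (simp add: finite_points)

lemma card_lines_through_two_le: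
  "x \<in> P \<Longrightarrow> y \<in> P \<Longrightarrow> x \<noteq> y \<Longrightarrow> card {l\<in>L. x \<in> l \<and> y \<in> l} \<le> 1"
  using gq unfolding gq_2t_def partial_linear_space_def by simp

lemma collinear_sym: "collinear L x y \<Longrightarrow> collinear L y x"
  unfolding collinear_def by blast

lemma collinear_on_line: "l \<in> L \<Longrightarrow> x \<in> l \<Longrightarrow> y \<in> l \<Longrightarrow> collinear L x y"
  unfolding collinear_def by blast

lemma collinear_in_points: "collinear L x y \<Longrightarrow> x \<in> P"
  unfolding collinear_def using line_subset by blast

lemma ex_line_through:
  assumes "x \<in> P"
  obtains l where "l \<in> L" "x \<in> l"
proof -
  have "{l\<in>L. x \<in> l} \<noteq> {}"
    using card_lines_through[OF assms] by (intro notI) simp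
  then show thesis
    using that by blast
qed

lemma collinear_refl: "x \<in> P \<Longrightarrow> collinear L x x"
  unfolding collinear_def by (meson ex_line_through)

lemma line_unique:
  assumes "x \<noteq> y" "l \<in> L" "m \<in> L" "x \<in> l" "y \<in> l" "x \<in> m" "y \<in> m"
  shows "l = m"
proof -
  have "card {l\<in>L. x \<in> l \<and> y \<in> l} \<le> 1"
    using assms line_subset by (intro card_lines_through_two_le) auto
  moreover have "finite {l\<in>L. x \<in> l \<and> y \<in> l}"
    using finite_lines by simp
  ultimately show ?thesis
    using assms by (auto simp: card_le_Suc0_iff_eq)
qed

lemma card_lines_through_two:
  assumes "x \<noteq> y" "collinear L x y"
  shows "card {l\<in>L. x \<in> l \<and> y \<in> l} = 1"
proof -
  obtain l where l: "l \<in> L" "x \<in> l" "y \<in> l"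
    using assms(2) unfolding collinear_def by blast
  then have "{l\<in>L. x \<in> l \<and> y \<in> l} = {l}"
    using line_unique[OF assms(1)] by blast
  then show ?thesis
    by simp
qed

lemma collinear_point_unique:
  "x \<in> P \<Longrightarrow> l \<in> L \<Longrightarrow> x \<notin> l \<Longrightarrow> u \<in> l \<Longrightarrow> v \<in> l \<Longrightarrow>
    collinear L x u \<Longrightarrow> collinear L x v \<Longrightarrow> u = v"
  using ex1_collinear_point by blast

lemma collinear_two_points_imp_on_line:
  "x \<in> P \<Longrightarrow> l \<in> L \<Longrightarrow> u \<in> l \<Longrightarrow> v \<in> l \<Longrightarrow> u \<noteq> v \<Longrightarrow>
    collinear L x u \<Longrightarrow> collinear L x v \<Longrightarrow> x \<in> l"
  using collinear_point_unique by blast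

lemma line_eq_of_distinct:
  assumes "l \<in> L" "a \<in> l" "b \<in> l" "c \<in> l" "a \<noteq> b" "b \<noteq> c" "a \<noteq> c"
  shows "l = {a, b, c}"
proof -
  have "finite l"
    using card_line[OF assms(1)] by (simp add: card_ge_0_finite)
  moreover have "card {a, b, c} = card l"
    using card_line[OF assms(1)] assms(5-7) by simp
  moreover have "{a, b, c} \<subseteq> l"
    using assms(2-4) by simp
  ultimately show ?thesis
    using card_subset_eq by metis
qed

lemma ex_third_point:
  assumes "l \<in> L" "a \<in> l" "b \<in> l" "a \<noteq> b"
  obtains c where "l = {a, b, c}" "c \<noteq> a" "c \<noteq> b"
proof -
  have "card (l - {a, b}) = 1"
    using card_line[OF assms(1)] assms(2-4) by (simp add: card_Diff_subset)
  then obtain c where "l - {a, b} = {c}"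
    by (rule card_1_singletonE)
  then show thesis
    using that assms(2,3) by blast
qed

lemma t_pos:
  assumes "x \<in> P"
  shows "0 < t"
proof -
  obtain y where y: "y \<in> P" "\<not> collinear L x y"
    using ex_noncollinear[OF assms] by blast
  obtain l where l: "l \<in> L" "y \<in> l"
    using ex_line_through[OF y(1)] by blast
  have "x \<notin> l"
    using l y(2) collinear_on_line by blast
  then obtain w where w: "w \<in> l" "collinear L x w"
    using ex1_collinear_point[OF assms l(1)] by blast
  then obtain m where m: "m \<in> L" "x \<in> m" "w \<in> m"
    unfolding collinear_def by blast
  have "{l, m} \<subseteq> {l\<in>L. w \<in> l}"
    using l m w by blast
  then have "card {l, m} \<le> card {l\<in>L. w \<in> l}"
    using finite_lines by (intro card_mono) simp_all
  also have "\<dots> = t + 1"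
    using l w line_subset by (intro card_lines_through) blast
  finally have "card {l, m} \<le> t + 1" .
  moreover have "l \<noteq> m"
    using m(2) \<open>x \<notin> l\<close> by blast
  ultimately show ?thesis
    by simp
qed

lemma ex_other_line_through:
  assumes "p \<in> P"
  obtains m where "m \<in> L" "p \<in> m" "m \<noteq> l"
proof -
  have "t \<le> card ({m\<in>L. p \<in> m} - {l})"
    using diff_card_le_card_Diff[of "{l}" "{m\<in>L. p \<in> m}"] card_lines_through[OF assms] by simp
  then have "{m\<in>L. p \<in> m} - {l} \<noteq> {}"
    using t_pos[OF assms] by (intro notI) simp
  then show thesis
    using that by blast
qed

lemma ex_far_point_on_line:
  assumes "x \<in> P" "l \<in> L" "y \<in> l" "\<not> collinear L x y"
  obtains p y' where "l = {y, p, y'}" "y' \<noteq> y" "collinear L x p" "\<not> collinear L x y'"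
proof -
  have "x \<notin> l"
    using assms(2-4) collinear_on_line by blast
  then obtain p where p: "p \<in> l" "collinear L x p"
    using ex1_collinear_point[OF assms(1,2)] by blast
  have "p \<noteq> y"
    using p assms(4) by blast
  obtain y' where y': "l = {y, p, y'}" "y' \<noteq> y" "y' \<noteq> p"
    using ex_third_point[OF assms(2,3) p(1) \<open>p \<noteq> y\<close>[symmetric]] .
  have "\<not> collinear L x y'"
    using collinear_point_unique[OF assms(1,2) \<open>x \<notin> l\<close> _ p(1) _ p(2), of y'] y' by blast
  then show thesis
    using that y' p(2) by blast
qed

lemma ex_noncollinear_to_both:
  assumes "collinear L a b"
  obtains v where "v \<in> P" "\<not> collinear L a v" "\<not> collinear L b v"
proof (cases "a = b")
  case True
  then show thesis
    using that ex_noncollinear collinear_in_points[OF assms] by blast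
next
  case False
  obtain n where n: "n \<in> L" "a \<in> n" "b \<in> n"
    using assms unfolding collinear_def by blast
  obtain c where c: "n = {a, b, c}" "c \<noteq> a" "c \<noteq> b"
    using ex_third_point[OF n False] .
  have "c \<in> n" "c \<in> P"
    using n(1) c(1) line_subset by blast+
  obtain m where m: "m \<in> L" "c \<in> m" "m \<noteq> n"
    using ex_other_line_through[OF \<open>c \<in> P\<close>] .
  have "card (m - {c}) = 2"
    using card_line[OF m(1)] m(2) by simp
  then have "m - {c} \<noteq> {}"
    by (intro notI) simp
  then obtain v where v: "v \<in> m" "v \<noteq> c"
    by blast
  have "\<not> collinear L z v" if "z \<in> n" "z \<noteq> c" for z
  proof
    assume "collinear L z v"
    moreover have "collinear L z c"
      using n(1) that(1) c(1) collinear_on_line by blast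
    ultimately have "z \<in> m"
      using collinear_two_points_imp_on_line[OF _ m(1) v(1) m(2) v(2)] collinear_in_points by blast
    then show False
      using line_unique[OF that(2) n(1) m(1) that(1) \<open>c \<in> n\<close> _ m(2)] m(3) by blast
  qed
  then show thesis
    using that v(1) m(1) line_subset n c by blast
qed

definition far_adjacent :: "'a \<Rightarrow> 'a \<Rightarrow> 'a \<Rightarrow> bool" where
  "far_adjacent x u v \<longleftrightarrow> collinear L u v \<and> \<not> collinear L x u \<and> \<not> collinear L x v"

lemma ex_far_neighbour_avoiding:
  assumes "x \<in> P" "y \<in> P" "\<not> collinear L x y" "collinear L y p" "p \<noteq> y"
  obtains y' where "far_adjacent x y y'" "\<not> collinear L y' p"
proof -
  obtain l where l: "l \<in> L" "y \<in> l" "p \<in> l"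
    using assms(4) unfolding collinear_def by blast
  obtain m where m: "m \<in> L" "y \<in> m" "m \<noteq> l"
    using ex_other_line_through[OF assms(2)] .
  obtain q y' where m_eq: "m = {y, q, y'}" "y' \<noteq> y" and "collinear L x q"
    and y': "\<not> collinear L x y'"
    using ex_far_point_on_line[OF assms(1) m(1,2) assms(3)] .
  have "\<not> collinear L y' p"
  proof
    assume "collinear L y' p"
    then have "p \<in> m"
      using collinear_two_points_imp_on_line[OF _ m(1) _ m(2) m_eq(2)] m_eq(1) l
        collinear_on_line collinear_sym collinear_in_points by blast
    then show False
      using line_unique[OF assms(5) l(1) m(1) l(3) l(2) _ m(2)] m(3) by blast
  qed
  moreover have "far_adjacent x y y'"
    using m(1) m_eq(1) assms(3) y' collinear_on_line unfolding far_adjacent_def by blast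
  ultimately show thesis
    using that by blast
qed

lemma far_connected_via_perp_point:
  assumes "x \<in> P" "y \<in> P" "\<not> collinear L x y" "\<not> collinear L x w"
    and "collinear L x p" "collinear L w p" "\<not> collinear L y p"
  shows "(far_adjacent x)\<^sup>*\<^sup>* y w"
proof (cases "collinear L y w")
  case True
  then show ?thesis
    using assms(3,4) unfolding far_adjacent_def by blast
next
  case y_w: False
  obtain m where m: "m \<in> L" "w \<in> m" "p \<in> m"
    using assms(6) unfolding collinear_def by blast
  obtain p' w' where m_eq: "m = {w, p', w'}" "w' \<noteq> w"
    and p': "collinear L x p'" and w': "\<not> collinear L x w'"
    using ex_far_point_on_line[OF assms(1) m(1,2) assms(4)] .
  have "x \<notin> m"
    using m(1,2) assms(4) collinear_on_line by blast
  have "p' = p"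
    using collinear_point_unique[OF assms(1) m(1) \<open>x \<notin> m\<close> _ m(3) p' assms(5)] m_eq(1) by blast
  have "y \<notin> m"
    using m(1,2) y_w collinear_on_line by blast
  then obtain v where v: "v \<in> m" "collinear L y v"
    using ex1_collinear_point[OF assms(2) m(1)] by blast
  have "v = w'"
    using v m_eq(1) \<open>p' = p\<close> y_w assms(7) by blast
  moreover have "collinear L w' w"
    using m(1) m_eq(1) collinear_on_line by blast
  ultimately have "far_adjacent x y w'" "far_adjacent x w' w"
    using v(2) assms(3,4) w' unfolding far_adjacent_def by blast+
  then show ?thesis
    by (blast intro: converse_rtranclp_into_rtranclp)
qed

lemma far_connected:
  assumes "x \<in> P" "y \<in> P" "w \<in> P" "\<not> collinear L x y" "\<not> collinear L x w"
  shows "(far_adjacent x)\<^sup>*\<^sup>* y w"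
proof (cases "collinear L y w")
  case True
  then show ?thesis
    using assms(4,5) unfolding far_adjacent_def by blast
next
  case y_w: False
  obtain l where l: "l \<in> L" "y \<in> l"
    using ex_line_through[OF assms(2)] .
  obtain p y' where l_eq: "l = {y, p, y'}" "y' \<noteq> y" and p: "collinear L x p"
    and y': "\<not> collinear L x y'"
    using ex_far_point_on_line[OF assms(1) l assms(4)] .
  have "w \<notin> l"
    using l y_w collinear_on_line by blast
  then obtain u where u: "u \<in> l" "collinear L w u"
    using ex1_collinear_point[OF assms(3) l(1)] by blast
  have "u \<noteq> y"
    using u(2) y_w collinear_sym by blast
  then consider "u = y'" | "u = p"
    using u(1) l_eq(1) by blast
  then show ?thesis
  proof cases
    case 1
    then have "far_adjacent x y y'" "far_adjacent x y' w"
      using l l_eq(1) u(2) assms(4,5) y' collinear_on_line collinear_sym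
      unfolding far_adjacent_def by blast+
    then show ?thesis
      by (blast intro: converse_rtranclp_into_rtranclp)
  next
    case 2
    have "collinear L y p"
      using l l_eq(1) collinear_on_line by blast
    moreover have "p \<noteq> y"
      using p assms(4) by blast
    ultimately obtain y1 where y1: "far_adjacent x y y1" "\<not> collinear L y1 p"
      using ex_far_neighbour_avoiding[OF assms(1,2,4)] by blast
    then have "y1 \<in> P" "\<not> collinear L x y1"
      unfolding far_adjacent_def using collinear_in_points collinear_sym by blast+
    moreover have "collinear L w p"
      using u(2) 2 by simp
    ultimately have "(far_adjacent x)\<^sup>*\<^sup>* y1 w"
      using far_connected_via_perp_point[OF assms(1) _ _ assms(5) p _ y1(2)] by blast
    with y1(1) show ?thesis
      by (rule converse_rtranclp_into_rtranclp)
  qed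
qed

definition perp :: "'a \<Rightarrow> 'a set" where
  "perp x = {y\<in>P. collinear L x y}"

lemma perp_subset: "perp x \<subseteq> P"
  unfolding perp_def by blast

lemma self_in_perp: "x \<in> P \<Longrightarrow> x \<in> perp x"
  unfolding perp_def using collinear_refl by blast

lemma finite_perp: "finite (perp x)"
  using finite_subset[OF perp_subset finite_points] .

lemma card_perp:
  assumes "x \<in> P"
  shows "card (perp x) = 2 * t + 3"
proof -
  have "1 * card (perp x - {x}) = 2 * card {l\<in>L. x \<in> l}"
  proof (rule card_double_counting[where R = "\<lambda>u l. u \<in> l"])
    show "finite (perp x - {x})" "finite {l\<in>L. x \<in> l}"
      using finite_perp finite_lines by simp_all
  next
    fix u
    assume "u \<in> perp x - {x}"
    then have "x \<noteq> u" "collinear L x u"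
      unfolding perp_def by auto
    then show "card {l\<in>{l\<in>L. x \<in> l}. u \<in> l} = 1"
      using card_lines_through_two by simp
  next
    fix l
    assume l: "l \<in> {l\<in>L. x \<in> l}"
    then have "{u\<in>perp x - {x}. u \<in> l} = l - {x}"
      unfolding perp_def using line_subset collinear_on_line by blast
    then show "card {u\<in>perp x - {x}. u \<in> l} = 2"
      using l card_line by simp
  qed
  then show ?thesis
    using card_lines_through[OF assms] self_in_perp[OF assms] finite_perp
    by (simp add: card_Diff_singleton)
qed

lemma line_inter_perp:
  assumes "x \<in> P" "l \<in> L" "x \<notin> l"
  obtains q where "l \<inter> perp x = {q}"
proof -
  obtain q where q: "q \<in> l" "collinear L x q"
    using ex1_collinear_point[OF assms] by blast
  then have "l \<inter> perp x = {q}"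
    using collinear_point_unique[OF assms] assms(2) line_subset unfolding perp_def by blast
  then show thesis
    using that by blast
qed

lemma card_perp_common:
  assumes "x \<in> P" "y \<in> P - perp x"
  shows "card {p\<in>perp x - {x}. collinear L y p} = t + 1"
proof -
  have y: "y \<in> P" "\<not> collinear L x y"
    using assms(2) unfolding perp_def by auto
  have "1 * card {p\<in>perp x - {x}. collinear L y p} = 1 * card {l\<in>L. y \<in> l}"
  proof (rule card_double_counting[where R = "\<lambda>p l. p \<in> l"])
    show "finite {p\<in>perp x - {x}. collinear L y p}" "finite {l\<in>L. y \<in> l}"
      using finite_perp finite_lines by simp_all
  next
    fix p
    assume p: "p \<in> {p\<in>perp x - {x}. collinear L y p}"
    then have "y \<noteq> p"
      using y(2) unfolding perp_def by blast
    then show "card {l\<in>{l\<in>L. y \<in> l}. p \<in> l} = 1"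
      using card_lines_through_two p by simp
  next
    fix l
    assume l: "l \<in> {l\<in>L. y \<in> l}"
    then have "x \<notin> l"
      using y(2) collinear_on_line by blast
    then have "{p\<in>{p\<in>perp x - {x}. collinear L y p}. p \<in> l} = l \<inter> perp x"
      using l collinear_on_line by blast
    moreover obtain q where "l \<inter> perp x = {q}"
      using line_inter_perp[OF assms(1) _ \<open>x \<notin> l\<close>] l by blast
    ultimately show "card {p\<in>{p\<in>perp x - {x}. collinear L y p}. p \<in> l} = 1"
      by simp
  qed
  then show ?thesis
    using card_lines_through[OF y(1)] by simp
qed

lemma card_lines_through_avoiding:
  assumes "p \<in> perp x - {x}"
  shows "card {l\<in>L. p \<in> l \<and> x \<notin> l} = t"
proof -
  have p: "p \<in> P" "collinear L x p" "p \<noteq> x"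
    using assms unfolding perp_def by auto
  obtain n where n: "n \<in> L" "x \<in> n" "p \<in> n"
    using p(2) unfolding collinear_def by blast
  have "{l\<in>L. p \<in> l \<and> x \<notin> l} = {l\<in>L. p \<in> l} - {n}"
    using line_unique[OF p(3)] n by blast
  then show ?thesis
    using card_lines_through[OF p(1)] n by simp
qed

lemma card_far_neighbours:
  assumes "x \<in> P" "p \<in> perp x - {x}"
  shows "card {y\<in>P - perp x. collinear L y p} = 2 * t"
proof -
  have "1 * card {y\<in>P - perp x. collinear L y p} = 2 * card {l\<in>L. p \<in> l \<and> x \<notin> l}"
  proof (rule card_double_counting[where R = "\<lambda>y l. y \<in> l"])
    show "finite {y\<in>P - perp x. collinear L y p}" "finite {l\<in>L. p \<in> l \<and> x \<notin> l}"
      using finite_points finite_lines by simp_all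
  next
    fix y
    assume y: "y \<in> {y\<in>P - perp x. collinear L y p}"
    then have "y \<noteq> p" "\<not> collinear L x y"
      using assms(2) unfolding perp_def by auto
    then have "{l\<in>{l\<in>L. p \<in> l \<and> x \<notin> l}. y \<in> l} = {l\<in>L. p \<in> l \<and> y \<in> l}"
      using collinear_on_line by blast
    then show "card {l\<in>{l\<in>L. p \<in> l \<and> x \<notin> l}. y \<in> l} = 1"
      using card_lines_through_two[OF \<open>y \<noteq> p\<close>[symmetric]] y collinear_sym by simp
  next
    fix l
    assume l: "l \<in> {l\<in>L. p \<in> l \<and> x \<notin> l}"
    then obtain q where q: "l \<inter> perp x = {q}"
      using line_inter_perp[OF assms(1)] by blast
    have "p \<in> l \<inter> perp x"
      using l assms(2) by blast
    then have perp_l: "l \<inter> perp x = {p}"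
      using q by simp
    have "{y\<in>{y\<in>P - perp x. collinear L y p}. y \<in> l} = l - {p}"
    proof (intro equalityI subsetI)
      fix y
      assume "y \<in> l - {p}"
      then show "y \<in> {y\<in>{y\<in>P - perp x. collinear L y p}. y \<in> l}"
        using perp_l l line_subset collinear_on_line by blast
    qed (use perp_l in blast)
    then show "card {y\<in>{y\<in>P - perp x. collinear L y p}. y \<in> l} = 2"
      using l card_line by simp
  qed
  then show ?thesis
    using card_lines_through_avoiding[OF assms(2)] by simp
qed

lemma card_far:
  assumes "x \<in> P"
  shows "card (P - perp x) = 4 * t"
proof -
  have "(t + 1) * card (P - perp x) = (2 * t) * card (perp x - {x})"
    using finite_points finite_perp card_perp_common[OF assms] card_far_neighbours[OF assms]
    by (intro card_double_counting[where R = "\<lambda>y p. collinear L y p"]) auto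
  also have "\<dots> = (t + 1) * (4 * t)"
    using card_perp[OF assms] self_in_perp[OF assms] finite_perp by (simp add: card_Diff_singleton)
  finally show ?thesis
    by (rule mult_left_cancel[THEN iffD1, rotated]) simp
qed

lemma card_points:
  assumes "x \<in> P"
  shows "card P = 6 * t + 3"
proof -
  have "card P = card (perp x) + card (P - perp x)"
    using finite_points perp_subset by (metis card_Diff_subset card_mono le_add_diff_inverse finite_perp)
  then show ?thesis
    using card_perp[OF assms] card_far[OF assms] by simp
qed

end

section \<open>Faithful representations\<close>

locale gq_2t_faithful_representation = gq_2t_space P L t
  for P :: "'a set" and L :: "'a set set" and t :: nat +
  fixes G :: "('g, 'b) monoid_scheme" (structure) and r :: "'a \<Rightarrow> 'g"
  assumes faithful: "faithful_representation P L G r"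

sublocale gq_2t_faithful_representation \<subseteq> group G
  using faithful unfolding faithful_representation_def representation_def by blast

context gq_2t_faithful_representation
begin

lemma inj_r: "inj_on r P"
proof -
  have "inj_on ((\<lambda>g. generate G {g}) \<circ> r) P"
    using faithful unfolding faithful_representation_def by (simp add: comp_def)
  then show ?thesis
    by (rule inj_on_imageI2)
qed

lemma is_representation: "representation P L G r"
  using faithful unfolding faithful_representation_def by simp

lemma r_carrier: "a \<in> P \<Longrightarrow> r a \<in> carrier G"
  and ord_r: "a \<in> P \<Longrightarrow> ord (r a) = 2"
  and generate_r_image: "generate G (r ` P) = carrier G"
  and klein_four_line: "l \<in> L \<Longrightarrow> l = {a, b, c} \<Longrightarrow> klein_four_subgroup G {\<one>, r a, r b, r c}"
  using is_representation unfolding representation_def by simp_all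

lemma r_involution: "a \<in> P \<Longrightarrow> r a \<otimes> r a = \<one>"
  and r_ne_one: "a \<in> P \<Longrightarrow> r a \<noteq> \<one>"
  using involution_of_ord_2[OF r_carrier ord_r] by simp_all

lemma r_line_prod: "l \<in> L \<Longrightarrow> l = {a, b, c} \<Longrightarrow> r a \<otimes> r b = r c"
  by (rule klein_four_prod[OF klein_four_line])

lemma r_prod_third_point:
  assumes "l \<in> L" "a \<in> l" "b \<in> l" "a \<noteq> b"
  obtains c where "c \<in> l" "c \<noteq> a" "c \<noteq> b" "r a \<otimes> r b = r c"
proof -
  obtain c where "l = {a, b, c}" "c \<noteq> a" "c \<noteq> b"
    using ex_third_point[OF assms] .
  then show thesis
    using that r_line_prod[OF assms(1)] by blast
qed

lemma r_prod_on_line: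
  assumes "l \<in> L" "a \<in> l" "b \<in> l" "a \<noteq> b" "w \<in> P" "r a \<otimes> r b = r w"
  shows "w \<in> l"
proof -
  obtain c where "c \<in> l" "r a \<otimes> r b = r c"
    using r_prod_third_point[OF assms(1-4)] by blast
  then show ?thesis
    using assms(1,5,6) line_subset inj_r by (metis inj_onD subsetD)
qed

lemma r_commute_collinear:
  assumes "collinear L a b"
  shows "r a \<otimes> r b = r b \<otimes> r a"
proof (cases "a = b")
  case False
  obtain l where l: "l \<in> L" "a \<in> l" "b \<in> l"
    using assms unfolding collinear_def by blast
  obtain c where "l = {a, b, c}"
    using ex_third_point[OF l False] by blast
  then show ?thesis
    using r_line_prod[OF l(1)] by (metis insert_commute)
qed simp

lemma r_prod_swap:
  assumes "a \<in> P" "b \<in> P" "c \<in> P" "r a \<otimes> r b = r c"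
  shows "r b \<otimes> r a = r c"
  using involutions_commute[of "r a" "r b"] assms r_carrier r_involution by simp

lemma r_prod_cancel:
  assumes "a \<in> P" "b \<in> P" "r a \<otimes> r b = r c"
  shows "r a \<otimes> r c = r b"
  using involution_cancel_left[of "r a" "r b"] assms r_carrier r_involution by simp

lemma noncollinear_prod_noncollinear:
  assumes "a \<in> P" "b \<in> P" "c \<in> P" "\<not> collinear L a b" "r a \<otimes> r b = r c"
  shows "\<not> collinear L a c" "\<not> collinear L b c"
proof -
  have *: "\<not> collinear L a c"
    if "a \<in> P" "b \<in> P" "\<not> collinear L a b" "r a \<otimes> r b = r c" for a b
  proof
    assume "collinear L a c"
    then obtain l where l: "l \<in> L" "a \<in> l" "c \<in> l"
      unfolding collinear_def by blast
    have "a \<noteq> c"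
      using that(1,2,4) r_carrier r_ne_one by force
    then have "b \<in> l"
      using r_prod_on_line[OF l _ that(2)] r_prod_cancel[OF that(1,2,4)] by blast
    then show False
      using l that(3) collinear_on_line by blast
  qed
  show "\<not> collinear L a c"
    using * assms by blast
  show "\<not> collinear L b c"
    using *[of b a] assms r_prod_swap collinear_sym by blast
qed

lemma collinear_with_prod:
  assumes P: "a \<in> P" "b \<in> P" "c \<in> P" "p \<in> P"
    and ab: "\<not> collinear L a b" and abc: "r a \<otimes> r b = r c"
    and pa: "collinear L p a" and pb: "collinear L p b"
  shows "collinear L p c"
proof (rule ccontr)
  (* Otherwise c is collinear with the third point a' of the line pa. With b' the third point
     of the line pb, r a' * r b' = r a * r b = r c, so b' is the third point of the line a'c.
     Being collinear with a' and p, b' then lies on the line pa, which forces pa = pb. *)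
  assume pc: "\<not> collinear L p c"
  have "p \<noteq> a" "p \<noteq> b"
    using ab pa pb collinear_sym by blast+
  obtain l1 where l1: "l1 \<in> L" "p \<in> l1" "a \<in> l1"
    using pa unfolding collinear_def by blast
  obtain a' where a': "a' \<in> l1" "a' \<noteq> p" "a' \<noteq> a" "r p \<otimes> r a = r a'"
    using r_prod_third_point[OF l1 \<open>p \<noteq> a\<close>] .
  obtain l2 where l2: "l2 \<in> L" "p \<in> l2" "b \<in> l2"
    using pb unfolding collinear_def by blast
  obtain b' where b': "b' \<in> l2" "b' \<noteq> p" "r p \<otimes> r b = r b'"
    using r_prod_third_point[OF l2 \<open>p \<noteq> b\<close>] by blast
  have a'P: "a' \<in> P" and b'P: "b' \<in> P"
    using a' b' l1 l2 line_subset by blast+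
  have "c \<notin> l1"
    using l1 pc collinear_on_line by blast
  then obtain u where u: "u \<in> l1" "collinear L c u"
    using ex1_collinear_point[OF P(3) l1(1)] by blast
  have "l1 = {p, a, a'}"
    using line_eq_of_distinct[OF l1(1,2,3) a'(1) \<open>p \<noteq> a\<close> a'(3)[symmetric] a'(2)[symmetric]] .
  moreover have "u \<noteq> p" "u \<noteq> a"
    using u(2) pc noncollinear_prod_noncollinear(1)[OF P(1-3) ab abc] collinear_sym by blast+
  ultimately have ca': "collinear L a' c"
    using u collinear_sym by blast
  have "r a' \<otimes> r b' = (r a \<otimes> r p) \<otimes> (r p \<otimes> r b)"
    using a'(4) b'(3) r_commute_collinear[OF pa] by simp
  also have "\<dots> = r c"
    using P abc r_carrier r_involution involution_cancel_middle by simp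
  finally have "r a' \<otimes> r c = r b'"
    using r_prod_cancel[OF a'P b'P] by blast
  moreover obtain l3 where "l3 \<in> L" "a' \<in> l3" "c \<in> l3"
    using ca' unfolding collinear_def by blast
  moreover have "a' \<noteq> c"
    using \<open>c \<notin> l1\<close> a'(1) by blast
  ultimately have "collinear L a' b'"
    using r_prod_on_line[OF _ _ _ _ b'P] collinear_on_line by metis
  then have "b' \<in> l1"
    using collinear_two_points_imp_on_line[OF b'P l1(1) a'(1) l1(2) a'(2)] b' l2
      collinear_on_line collinear_sym by blast
  then have "l1 = l2"
    using line_unique[OF b'(2) l1(1) l2(1) _ l1(2) b'(1) l2(2)] by blast
  then show False
    using ab l1(3) l2 collinear_on_line by blast
qed

definition prod_in_image :: "'a \<Rightarrow> 'a \<Rightarrow> bool" where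
  "prod_in_image a b \<longleftrightarrow> r a \<otimes> r b \<in> r ` P"

lemma prod_in_image_sym:
  "a \<in> P \<Longrightarrow> b \<in> P \<Longrightarrow> prod_in_image a b \<Longrightarrow> prod_in_image b a"
  unfolding prod_in_image_def using r_prod_swap by blast

lemma prod_in_image_step:
  assumes "x \<in> P" "y \<in> P" "p \<in> P" "\<not> collinear L x y"
    and "collinear L x p" "collinear L p y" "r p \<otimes> r y = r y'" "prod_in_image x y"
  shows "prod_in_image x y'"
proof -
  obtain z where z: "z \<in> P" "r x \<otimes> r y = r z"
    using assms(8) unfolding prod_in_image_def by blast
  have pz: "collinear L p z"
    using collinear_with_prod[OF assms(1-2) z(1) assms(3-4) z(2) collinear_sym[OF assms(5)] assms(6)] .
  have "p \<noteq> z"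
    using assms(6) noncollinear_prod_noncollinear(2)[OF assms(1,2) z(1) assms(4) z(2)] collinear_sym
    by blast
  obtain m where m: "m \<in> L" "p \<in> m" "z \<in> m"
    using pz unfolding collinear_def by blast
  obtain w where "w \<in> m" "r p \<otimes> r z = r w"
    using r_prod_third_point[OF m \<open>p \<noteq> z\<close>] by blast
  then have w: "w \<in> P" "r p \<otimes> r z = r w"
    using m(1) line_subset by blast+
  have "r x \<otimes> r y' = (r x \<otimes> r p) \<otimes> r y"
    using assms(1-3,7) r_carrier by (simp add: m_assoc)
  also have "\<dots> = r p \<otimes> (r x \<otimes> r y)"
    using r_commute_collinear[OF assms(5)] assms(1-3) r_carrier by (simp add: m_assoc)
  also have "\<dots> = r w"
    using z(2) w(2) by simp
  finally show ?thesis
    using w(1) unfolding prod_in_image_def by blast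
qed

lemma prod_in_image_far_adjacent:
  assumes "x \<in> P" "far_adjacent x y y'" "prod_in_image x y"
  shows "prod_in_image x y'"
proof (cases "y = y'")
  case False
  have xy: "\<not> collinear L x y" "\<not> collinear L x y'" and "collinear L y y'"
    using assms(2) unfolding far_adjacent_def by blast+
  then obtain l where l: "l \<in> L" "y \<in> l" "y' \<in> l"
    unfolding collinear_def by blast
  obtain p where l_eq: "l = {y, y', p}"
    using ex_third_point[OF l False] by blast
  have yP: "y \<in> P" and pP: "p \<in> P"
    using l l_eq line_subset by blast+
  have "x \<notin> l"
    using l xy collinear_on_line by blast
  then obtain q where "q \<in> l" "collinear L x q"
    using ex1_collinear_point[OF assms(1) l(1)] by blast
  then have "collinear L x p"
    using l_eq xy by blast
  moreover have "collinear L p y"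
    using l l_eq collinear_on_line by blast
  moreover have "r p \<otimes> r y = r y'"
    using r_line_prod[OF l(1)] l_eq by (simp add: insert_commute)
  ultimately show ?thesis
    using prod_in_image_step[OF assms(1) yP pP xy(1)] assms(3) by blast
qed (use assms(3) in simp)

lemma prod_in_image_far:
  assumes "x \<in> P" "y \<in> P" "w \<in> P" "\<not> collinear L x y" "\<not> collinear L x w"
    and "prod_in_image x y"
  shows "prod_in_image x w"
  using far_connected[OF assms(1-5)] assms(6)
  by (induction rule: rtranclp_induct) (auto intro: prod_in_image_far_adjacent[OF assms(1)])

lemma prod_in_image_all:
  assumes "x \<in> P" "y \<in> P" "\<not> collinear L x y" "prod_in_image x y"
    and "a \<in> P" "b \<in> P" "\<not> collinear L a b"
  shows "prod_in_image a b"
proof -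
  have far_x: "prod_in_image w c"
    if "w \<in> P" "\<not> collinear L x w" "c \<in> P" "\<not> collinear L w c" for w c
  proof -
    have "prod_in_image w x"
      using prod_in_image_far[OF assms(1,2) that(1) assms(3) that(2) assms(4)]
        prod_in_image_sym assms(1) that(1) by blast
    then show ?thesis
      using prod_in_image_far[OF that(1) assms(1) that(3) _ that(4)] that(2) collinear_sym by blast
  qed
  show ?thesis
  proof (cases "collinear L x a")
    case True
    then obtain v where v: "v \<in> P" "\<not> collinear L x v" "\<not> collinear L a v"
      using ex_noncollinear_to_both by blast
    then have "prod_in_image a v"
      using far_x[OF v(1,2) assms(5)] prod_in_image_sym assms(5) collinear_sym by blast
    then show ?thesis
      using prod_in_image_far[OF assms(5) v(1) assms(6) v(3) assms(7)] by blast
  qed (use far_x assms(5-7) in blast)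
qed

lemma card_insert_one_image:
  assumes "A \<subseteq> P"
  shows "card (insert \<one> (r ` A)) = card A + 1"
proof -
  have "\<one> \<notin> r ` A"
    using assms r_ne_one by force
  moreover have "inj_on r A"
    using inj_on_subset[OF inj_r assms] .
  moreover have "finite A"
    using finite_subset[OF assms finite_points] .
  ultimately show ?thesis
    by (simp add: card_image)
qed

context
  assumes all_prod_in_image: "\<And>a b. a \<in> P \<Longrightarrow> b \<in> P \<Longrightarrow> \<not> collinear L a b \<Longrightarrow> prod_in_image a b"
begin

lemma carrier_eq_insert_one_image: "carrier G = insert \<one> (r ` P)"
proof -
  have "r a \<otimes> r b \<in> insert \<one> (r ` P)" if "a \<in> P" "b \<in> P" for a b
  proof (cases "collinear L a b")
    case True
    show ?thesis
    proof (cases "a = b")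
      case False
      obtain l where "l \<in> L" "a \<in> l" "b \<in> l"
        using True unfolding collinear_def by blast
      then show ?thesis
        using r_prod_third_point[OF _ _ _ False] line_subset by blast
    qed (simp add: r_involution that)
  qed (use all_prod_in_image that in \<open>auto simp: prod_in_image_def\<close>)
  then have "subgroup (insert \<one> (r ` P)) G"
    using r_carrier r_involution by (intro subgroup_insert_one_of_involutions) auto
  then have "carrier G \<subseteq> insert \<one> (r ` P)"
    using generate_subgroup_incl[of "r ` P"] generate_r_image by blast
  then show ?thesis
    using r_carrier by auto
qed

lemma subgroup_perp:
  assumes "x \<in> P"
  shows "subgroup (insert \<one> (r ` perp x)) G"
proof -
  have "r a \<otimes> r b \<in> insert \<one> (r ` perp x)" if "a \<in> perp x" "b \<in> perp x" for a b
  proof -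
    have a: "a \<in> P" "collinear L x a" and b: "b \<in> P" "collinear L x b"
      using that unfolding perp_def by auto
    consider "a = b" | "a \<noteq> b" "collinear L a b" | "\<not> collinear L a b"
      by blast
    then show ?thesis
    proof cases
      case 1
      then show ?thesis
        using r_involution a(1) by simp
    next
      case 2
      obtain l where l: "l \<in> L" "a \<in> l" "b \<in> l"
        using 2(2) unfolding collinear_def by blast
      have "x \<in> l"
        using collinear_two_points_imp_on_line[OF assms l(1,2,3) 2(1) a(2) b(2)] .
      obtain c where "c \<in> l" "r a \<otimes> r b = r c"
        using r_prod_third_point[OF l 2(1)] by blast
      moreover have "c \<in> perp x"
        using \<open>c \<in> l\<close> \<open>x \<in> l\<close> l(1) line_subset collinear_on_line unfolding perp_def by blast
      ultimately show ?thesis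
        by simp
    next
      case 3
      obtain c where c: "c \<in> P" "r a \<otimes> r b = r c"
        using all_prod_in_image[OF a(1) b(1) 3] unfolding prod_in_image_def by blast
      have "collinear L x c"
        using collinear_with_prod[OF a(1) b(1) c(1) assms 3 c(2)] a(2) b(2) by blast
      then show ?thesis
        using c unfolding perp_def by simp
    qed
  qed
  then show ?thesis
    using perp_subset r_carrier r_involution by (intro subgroup_insert_one_of_involutions) blast+
qed

end

lemma t_eq_2_and_order_16_if_noncollinear_prod_in_image:
  assumes "x \<in> P" "y \<in> P" "\<not> collinear L x y" "prod_in_image x y"
  shows "t = 2 \<and> order G = 16"
proof -
  note all = prod_in_image_all[OF assms]
  have "carrier G = insert \<one> (r ` P)"
    by (rule carrier_eq_insert_one_image[OF all])
  then have "order G = 6 * t + 4"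
    unfolding order_def using card_insert_one_image card_points[OF assms(1)] by simp
  moreover have "card (insert \<one> (r ` perp x)) = 2 * t + 4"
    using card_insert_one_image[OF perp_subset] card_perp[OF assms(1)] by simp
  ultimately have "2 * t + 4 dvd 6 * t + 4"
    using lagrange[OF subgroup_perp[OF all assms(1)]] by (metis dvd_triv_right)
  then have "t = 2"
    using eq_2_if_dvd_6n_plus_4 t_pos[OF assms(1)] by blast
  with \<open>order G = 6 * t + 4\<close> show ?thesis
    by simp
qed

end

theorem proposition3p3:
  fixes P :: "'a set" and L :: "'a set set" and t :: nat
    and R :: "('g, 'b) monoid_scheme" and r :: "'a \<Rightarrow> 'g"
  assumes "finite P"
    and "gq_2t P L t"
    and "faithful_representation P L R r"
    and "(t, order R) \<noteq> (2, 2 ^ 4)"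
    and "x \<in> P" and "y \<in> P" and "x \<noteq> y"
    and "r x \<otimes>\<^bsub>R\<^esub> r y \<in> r ` P"
  shows "collinear L x y"
proof (rule ccontr)
  assume "\<not> collinear L x y"
  interpret gq_2t_faithful_representation P L t R r
    using assms(1-3) by unfold_locales
  have "t = 2 \<and> order R = 16"
    using t_eq_2_and_order_16_if_noncollinear_prod_in_image[OF assms(5,6) \<open>\<not> collinear L x y\<close>]
      assms(8) unfolding prod_in_image_def by blast
  then show False
    using assms(4) by simp
qed

end
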